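(* Let $\Omega$ be a finite nonempty set, $\mathcal{A}=2^\Omega$, and let $\mu$ be a $q$-measure on $\mathcal{A}$. If $\phi$ and $\psi$ are quadratic coevents on $\mathcal{A}$ that are both 1-generated by $\mu$, then $\phi=\psi$.
   Context: Let $\Omega$ be a finite nonempty set and $\mathcal{A}=2^\Omega$. A coevent is a map $\phi:\mathcal{A}\to\{0,1\}$ with $\phi(\emptyset)=0$. A coevent $\phi$ is quadratic if for all pairwise disjoint $A,B,C\in\mathcal{A}$: $\phi(A\cup B\cup C)=\phi(A\cup B)\oplus\phi(A\cup C)\oplus\phi(B\cup C)\oplus\phi(A)\oplus\phi(B)\oplus\phi(C)$, where $\oplus$ is addition mod 2. For $f:\Omega\to[0,\infty)$ and a coevent $\phi$, the $q$-integral is $\int f\,d\phi=\int_0^\infty \phi(\{\omega\in\Omega: f(\omega)>\lambda\})\,d\lambda$ (Lebesgue measure in $\lambda$), and for $A\in\mathcal{A}$, $\int_A f\,d\phi=\int f\chi_A\,d\phi$. A $q$-measure is a map $\mu:\mathcal{A}\to[0,\infty)$ such that for all pairwise disjoint $A,B,C\in\mathcal{A}$: $\mu(A\cup B\cup C)=\mu(A\cup B)+\mu(A\cup C)+\mu(B\cup C)-\mu(A)-\mu(B)-\mu(C)$. The $q$-measure $\mu$ 1-generates $\phi$ if there is a function $f:\Omega\to(0,\infty)$ with $\mu(A)=\int_A f\,d\phi$ for all $A\in\mathcal{A}$. *)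

theory Defs
  imports "HOL-Analysis.Analysis"
begin

text \<open>Omega is the (finite, nonempty) universe of a type of class finite; A = 2^Omega is
  the type 'a set. Coevent values {0,1} are represented as naturals 0 and 1, and
  addition mod 2 is (x + y) mod 2.\<close>

definition coevent :: "('a::finite set \<Rightarrow> nat) \<Rightarrow> bool" where
  "coevent \<phi> \<longleftrightarrow> (\<forall>A. \<phi> A \<in> {0, 1}) \<and> \<phi> {} = 0"

definition pairwise_disjoint3 :: "'a set \<Rightarrow> 'a set \<Rightarrow> 'a set \<Rightarrow> bool" where
  "pairwise_disjoint3 A B C \<longleftrightarrow> A \<inter> B = {} \<and> A \<inter> C = {} \<and> B \<inter> C = {}"

definition quadratic_coevent :: "('a::finite set \<Rightarrow> nat) \<Rightarrow> bool" where
  "quadratic_coevent \<phi> \<longleftrightarrow> coevent \<phi> \<and>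
     (\<forall>A B C. pairwise_disjoint3 A B C \<longrightarrow>
        \<phi> (A \<union> B \<union> C) =
          (\<phi> (A \<union> B) + \<phi> (A \<union> C) + \<phi> (B \<union> C) + \<phi> A + \<phi> B + \<phi> C) mod 2)"

definition q_integral :: "('a::finite \<Rightarrow> real) \<Rightarrow> ('a set \<Rightarrow> nat) \<Rightarrow> real" where
  "q_integral f \<phi> = (LINT t:{0..}|lborel. real (\<phi> {\<omega>. f \<omega> > t}))"

definition q_integral_on :: "'a::finite set \<Rightarrow> ('a \<Rightarrow> real) \<Rightarrow> ('a set \<Rightarrow> nat) \<Rightarrow> real" where
  "q_integral_on A f \<phi> = q_integral (\<lambda>\<omega>. f \<omega> * indicator A \<omega>) \<phi>"

definition q_measure :: "('a::finite set \<Rightarrow> real) \<Rightarrow> bool" where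
  "q_measure \<mu> \<longleftrightarrow> (\<forall>A. \<mu> A \<ge> 0) \<and>
     (\<forall>A B C. pairwise_disjoint3 A B C \<longrightarrow>
        \<mu> (A \<union> B \<union> C) = \<mu> (A \<union> B) + \<mu> (A \<union> C) + \<mu> (B \<union> C) - \<mu> A - \<mu> B - \<mu> C)"

definition one_generates :: "('a::finite set \<Rightarrow> real) \<Rightarrow> ('a set \<Rightarrow> nat) \<Rightarrow> bool" where
  "one_generates \<mu> \<phi> \<longleftrightarrow>
     (\<exists>f::'a \<Rightarrow> real. (\<forall>\<omega>. f \<omega> > 0) \<and> (\<forall>A. \<mu> A = q_integral_on A f \<phi>))"

end

theory Submission
  imports Defs
begin

(* On a set with at most two points the q-integral is an explicit
   piecewise-linear expression:  for m = min (f a) (f b),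
     \<integral>_{a,b} f d\<phi> = \<phi>{a,b} m + \<phi>{a} (f a - m) + \<phi>{b} (f b - m),
   which for a = b reduces to \<integral>_{a} f d\<phi> = \<phi>{a} f a.
   Suppose \<mu> 1-generates \<phi> via f and \<psi> via g.  Comparing \<mu>{a} shows
   \<phi>{a} = \<psi>{a}, and f a = g a whenever this common value is 1; comparing
   \<mu>{a,b} then forces \<phi>{a,b} = \<psi>{a,b}.  Finally, the grade-2 additivity
   of a quadratic coevent expresses its value on a set with at least three
   points through values on strictly smaller sets, so by induction on the
   cardinality two quadratic coevents agreeing on all sets with at most two
   points are equal. *)

lemma integral_two_step:
  fixes g :: "real \<Rightarrow> real"
  assumes "0 \<le> x" "x \<le> y"
    and "\<And>t. t \<ge> 0 \<Longrightarrow> g t = (if t < x then c else if t < y then d else 0)"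
  shows "(LINT t:{0..}|lborel. g t) = c * x + d * (y - x)"
proof -
  have step: "(\<lambda>t. indicator {0..} t *\<^sub>R g t) =
      (\<lambda>t. c * indicator {0..<x} t + d * indicator {x..<y} t)"
  proof
    fix t :: real
    show "indicator {0..} t *\<^sub>R g t = c * indicator {0..<x} t + d * indicator {x..<y} t"
      using assms by (cases "t \<ge> 0") (auto simp: indicator_def)
  qed
  have int_c: "integrable lborel (\<lambda>t::real. c * indicator {0..<x} t)"
    and int_d: "integrable lborel (\<lambda>t::real. d * indicator {x..<y} t)"
    using assms(1,2) by (intro integrable_mult_right integrable_real_indicator; simp)+
  have "(LINT t:{0..}|lborel. g t) =
      integral\<^sup>L lborel (\<lambda>t. c * indicator {0..<x} t + d * indicator {x..<y} t)"
    unfolding set_lebesgue_integral_def step ..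
  also have "\<dots> = c * x + d * (y - x)"
    using assms(1,2) by (simp add: Bochner_Integration.integral_add[OF int_c int_d] measure_def)
  finally show ?thesis .
qed

text \<open>The q-integral over a set \<open>{a,b}\<close> (possibly \<open>a = b\<close>) when \<open>f a \<le> f b\<close>:
  the level set is \<open>{a,b}\<close> below \<open>f a\<close>, \<open>{b}\<close> between \<open>f a\<close> and \<open>f b\<close>,
  and empty above.\<close>

lemma q_integral_on_pair_ordered:
  assumes "\<phi> {} = 0" "0 \<le> f a" "f a \<le> f b"
  shows "q_integral_on {a, b} f \<phi> = real (\<phi> {a, b}) * f a + real (\<phi> {b}) * (f b - f a)"
  unfolding q_integral_on_def q_integral_def
proof (rule integral_two_step[OF assms(2,3)])
  fix t :: real
  assume "t \<ge> 0"
  then have "{\<omega>. f \<omega> * indicator {a, b} \<omega> > t} =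
      (if t < f a then {a, b} else if t < f b then {b} else {})"
    using assms(3) by (auto simp: indicator_def)
  then show "real (\<phi> {\<omega>. f \<omega> * indicator {a, b} \<omega> > t}) =
      (if t < f a then real (\<phi> {a, b}) else if t < f b then real (\<phi> {b}) else 0)"
    using assms(1) by simp
qed

lemma q_integral_on_pair:
  assumes "\<phi> {} = 0" "0 \<le> f a" "0 \<le> f b"
  shows "q_integral_on {a, b} f \<phi> =
    real (\<phi> {a, b}) * min (f a) (f b) + real (\<phi> {a}) * (f a - min (f a) (f b))
      + real (\<phi> {b}) * (f b - min (f a) (f b))"
proof (cases "f a \<le> f b")
  case True
  then show ?thesis using q_integral_on_pair_ordered[of \<phi> f a b] assms by simp
next
  case False
  then show ?thesis
    using q_integral_on_pair_ordered[of \<phi> f b a] assms by (simp add: insert_commute)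
qed

lemma q_integral_on_singleton:
  assumes "\<phi> {} = 0" "0 \<le> f a"
  shows "q_integral_on {a} f \<phi> = real (\<phi> {a}) * f a"
  using q_integral_on_pair[of \<phi> f a a] assms by simp

lemma equal_q_integrals_singleton:
  assumes "coevent \<phi>" "coevent \<psi>" "f a > 0" "g a > 0"
    and "q_integral_on {a} f \<phi> = q_integral_on {a} g \<psi>"
  shows "\<phi> {a} = \<psi> {a}" and "\<phi> {a} = 1 \<Longrightarrow> f a = g a"
proof -
  have zero_one: "\<phi> {a} \<in> {0, 1}" "\<psi> {a} \<in> {0, 1}" "\<phi> {} = 0" "\<psi> {} = 0"
    using assms(1,2) by (auto simp: coevent_def)
  have "real (\<phi> {a}) * f a = real (\<psi> {a}) * g a"
    using assms(3-5) zero_one(3,4) by (simp add: q_integral_on_singleton)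
  then show "\<phi> {a} = \<psi> {a}" and "\<phi> {a} = 1 \<Longrightarrow> f a = g a"
    using zero_one(1,2) assms(3,4) by auto
qed

text \<open>If both singleton values are 0, only the
  \<open>{a,b}\<close>-terms remain, with positive minima; if both are 1, \<open>f\<close> and \<open>g\<close>
  agree on \<open>{a,b}\<close>; if only \<open>\<phi>{a} = 1\<close>, the integral equals \<open>f a = g a\<close> exactly when the
  \<open>{a,b}\<close>-value is 1.\<close>

lemma equal_q_integrals_pair:
  assumes "coevent \<phi>" "coevent \<psi>" "f a > 0" "f b > 0" "g a > 0" "g b > 0"
    and "q_integral_on {a} f \<phi> = q_integral_on {a} g \<psi>"
    and "q_integral_on {b} f \<phi> = q_integral_on {b} g \<psi>"
    and "q_integral_on {a, b} f \<phi> = q_integral_on {a, b} g \<psi>"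
  shows "\<phi> {a, b} = \<psi> {a, b}"
proof -
  have zero_one: "\<phi> {a, b} \<in> {0, 1}" "\<psi> {a, b} \<in> {0, 1}" "\<phi> {a} \<in> {0, 1}" "\<phi> {b} \<in> {0, 1}"
    and empty: "\<phi> {} = 0" "\<psi> {} = 0"
    using assms(1,2) by (auto simp: coevent_def)
  have sa: "\<psi> {a} = \<phi> {a}" "\<phi> {a} = 1 \<Longrightarrow> g a = f a"
    using equal_q_integrals_singleton[OF assms(1,2,3,5,7)] by auto
  have sb: "\<psi> {b} = \<phi> {b}" "\<phi> {b} = 1 \<Longrightarrow> g b = f b"
    using equal_q_integrals_singleton[OF assms(1,2,4,6,8)] by auto
  have "real (\<phi> {a, b}) * min (f a) (f b) + real (\<phi> {a}) * (f a - min (f a) (f b))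
        + real (\<phi> {b}) * (f b - min (f a) (f b)) =
      real (\<psi> {a, b}) * min (g a) (g b) + real (\<phi> {a}) * (g a - min (g a) (g b))
        + real (\<phi> {b}) * (g b - min (g a) (g b))"
    using assms(9) q_integral_on_pair[of \<phi> f a b] q_integral_on_pair[of \<psi> g a b]
      assms(3-6) empty sa(1) sb(1) by simp
  then show ?thesis
    using zero_one sa(2) sb(2) assms(3-6)
    by (elim insertE emptyE) (auto simp: min_def split: if_splits)
qed

text \<open>A quadratic coevent is determined by its values on sets with at most two
  points: grade-2 additivity splits a set with at least three points into two
  points and the rest, expressing its value through strictly smaller sets.\<close>

lemma quadratic_coevents_eq_on_small_sets:
  fixes \<phi> \<psi> :: "'a::finite set \<Rightarrow> nat"
  assumes "quadratic_coevent \<phi>" "quadratic_coevent \<psi>"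
    and small: "\<And>S. card S \<le> 2 \<Longrightarrow> \<phi> S = \<psi> S"
  shows "\<phi> = \<psi>"
proof
  fix S :: "'a set"
  show "\<phi> S = \<psi> S"
  proof (induction "card S" arbitrary: S rule: less_induct)
    case less
    show ?case
    proof (cases "card S \<le> 2")
      case True
      then show ?thesis by (rule small)
    next
      case False
      then obtain a b where ab: "a \<in> S" "b \<in> S" "a \<noteq> b"
        using card_le_Suc0_iff_eq[of S] by auto
      define C where "C = S - {a, b}"
      have split: "S = {a} \<union> {b} \<union> C" and disjoint: "pairwise_disjoint3 {a} {b} C"
        using ab unfolding C_def pairwise_disjoint3_def by auto
      have "card C = card S - 2"
        using ab unfolding C_def by (simp add: card_Diff_subset)
      then have smaller: "card ({a} \<union> {b}) < card S" "card ({a} \<union> C) < card S"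
        "card ({b} \<union> C) < card S" "card {a} < card S" "card {b} < card S" "card C < card S"
        using False ab by (simp_all add: C_def card_insert_if)
      have "\<phi> S = (\<phi> ({a} \<union> {b}) + \<phi> ({a} \<union> C) + \<phi> ({b} \<union> C) + \<phi> {a} + \<phi> {b} + \<phi> C) mod 2"
        using assms(1) disjoint unfolding split quadratic_coevent_def by blast
      also have "\<dots> = (\<psi> ({a} \<union> {b}) + \<psi> ({a} \<union> C) + \<psi> ({b} \<union> C) + \<psi> {a} + \<psi> {b} + \<psi> C) mod 2"
        using smaller by (simp add: less.hyps)
      also have "\<dots> = \<psi> S"
        using assms(2) disjoint unfolding split quadratic_coevent_def by metis
      finally show ?thesis .
    qed
  qed
qed

theorem theorem5p2:
  fixes \<mu> :: "'a::finite set \<Rightarrow> real" and \<phi> \<psi> :: "'a set \<Rightarrow> nat"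
  assumes "q_measure \<mu>"
    and "quadratic_coevent \<phi>" and "quadratic_coevent \<psi>"
    and "one_generates \<mu> \<phi>" and "one_generates \<mu> \<psi>"
  shows "\<phi> = \<psi>"
proof -
  obtain f g where pos: "\<And>\<omega>. f \<omega> > 0" "\<And>\<omega>. g \<omega> > 0"
    and same: "\<And>A. q_integral_on A f \<phi> = q_integral_on A g \<psi>"
    using assms(4,5) unfolding one_generates_def by metis
  have coevents: "coevent \<phi>" "coevent \<psi>"
    using assms(2,3) by (simp_all add: quadratic_coevent_def)
  show ?thesis
  proof (rule quadratic_coevents_eq_on_small_sets[OF assms(2,3)])
    fix S :: "'a set"
    assume "card S \<le> 2"
    then have "card S = 0 \<or> card S = 1 \<or> card S = 2"
      by linarith
    then consider "S = {}" | a where "S = {a}" | a b where "S = {a, b}"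
      by (auto simp: card_1_singleton_iff card_2_iff)
    then show "\<phi> S = \<psi> S"
      using coevents equal_q_integrals_singleton[OF coevents pos(1) pos(2) same]
        equal_q_integrals_pair[OF coevents pos(1) pos(1) pos(2) pos(2) same same same]
      by cases (auto simp: coevent_def)
  qed
qed

end
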